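(* Let $(k_n)_{n\ge1}$ be positive with $\sum_{j\ge1}k_j\le1$, let $a=-\sum_{j\ge1}k_j$, $\lambda_n=\sum_{j\ge n}k_j$ for $n\ge1$ and $\lambda_0:=1$, and suppose $\lambda_n^2\le\lambda_{n-1}\lambda_{n+1}$ for all $n\ge1$. Let $r$ be the discrete resolvent. Then $\Delta_n:=r_{n-1}-r_n$ ($n\ge1$) satisfies $\Delta_n=\lambda_n-\sum_{j=1}^{n-1}\lambda_{n-j}\Delta_j$, $\Delta_n\ge0$ for all $n\ge1$, so $(r_n)_{n\ge0}$ is non-increasing.
   Context: The discrete resolvent $r=(r_n)_{n\ge0}$ is the unique solution of $r_{n+1}-r_n=ar_n+\sum_{j=1}^nk_jr_{n-j}$ for $n\ge0$, $r_0=1$. *)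

theory Defs
  imports Complex_Main
begin

definition is_discrete_resolvent :: "real \<Rightarrow> (nat \<Rightarrow> real) \<Rightarrow> (nat \<Rightarrow> real) \<Rightarrow> bool" where
  "is_discrete_resolvent a k r \<longleftrightarrow>
     r 0 = 1 \<and> (\<forall>n. r (Suc n) - r n = a * r n + (\<Sum>j=1..n. k j * r (n - j)))"

definition lam :: "(nat \<Rightarrow> real) \<Rightarrow> nat \<Rightarrow> real" where
  "lam k n = (if n = 0 then 1 else (\<Sum>j. k (j + n)))"

end

theory Submission
  imports Defs
begin

text \<open>
  Write \<open>\<lambda>\<close> for \<open>lam k\<close>.  Since \<open>k\<^sub>n = \<lambda>\<^sub>n - \<lambda>\<^sub>n\<^sub>+\<^sub>1\<close> for \<open>n \<ge> 1\<close>
  and \<open>1 + a = \<lambda>\<^sub>0 - \<lambda>\<^sub>1\<close>, the resolvent equation reads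
  \<open>r\<^sub>n\<^sub>+\<^sub>1 = \<Sum>\<^sub>i\<^sub>\<le>\<^sub>n (\<lambda>\<^sub>i - \<lambda>\<^sub>i\<^sub>+\<^sub>1) r\<^sub>n\<^sub>-\<^sub>i\<close>.  Telescoping turns this into the renewal
  identity \<open>\<Sum>\<^sub>i\<^sub>\<le>\<^sub>n \<lambda>\<^sub>i r\<^sub>n\<^sub>-\<^sub>i = 1\<close>, and subtracting two consecutive instances gives
  \<open>\<Sum>\<^sub>j\<^sub>=\<^sub>1\<^sub>.\<^sub>.\<^sub>n \<lambda>\<^sub>n\<^sub>-\<^sub>j \<Delta>\<^sub>j = \<lambda>\<^sub>n\<close>, i.e. the claimed equation for \<open>\<Delta>\<close>.
  Nonnegativity of \<open>\<Delta>\<close> is a Kaluza-type statement: for a positive sequence whose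
  ratios \<open>\<lambda>\<^sub>n\<^sub>+\<^sub>1 / \<lambda>\<^sub>n\<close> increase (which is exactly log-convexity), the solution
  \<open>\<Delta>\<close> of that convolution equation is nonnegative, by strong induction on \<open>n\<close>.
\<close>

lemma renewal_identity:
  fixes L r :: "nat \<Rightarrow> real"
  assumes L0: "L 0 = 1" and r0: "r 0 = 1"
    and rec: "\<And>n. r (Suc n) = (\<Sum>i=0..n. (L i - L (Suc i)) * r (n - i))"
  shows "(\<Sum>i=0..n. L i * r (n - i)) = 1"
proof (induction n)
  case 0
  then show ?case by (simp add: L0 r0)
next
  case (Suc n)
  have "(\<Sum>i=0..Suc n. L i * r (Suc n - i)) = L 0 * r (Suc n) + (\<Sum>i=0..n. L (Suc i) * r (n - i))"
    by (subst sum.atLeast0_atMost_Suc_shift) simp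
  also have "r (Suc n) = (\<Sum>i=0..n. L i * r (n - i)) - (\<Sum>i=0..n. L (Suc i) * r (n - i))"
    by (simp add: rec sum_subtractf left_diff_distrib)
  finally show ?case using Suc L0 by simp
qed

lemma renewal_increments:
  fixes L r :: "nat \<Rightarrow> real"
  assumes L0: "L 0 = 1"
    and renewal: "\<And>n. (\<Sum>i=0..n. L i * r (n - i)) = 1"
    and n: "n \<ge> 1"
  shows "(\<Sum>j=1..n. L (n - j) * (r (j - 1) - r j)) = L n"
proof -
  obtain m where m: "n = Suc m" using n by (cases n) auto
  have r0: "r 0 = 1" using renewal[of 0] L0 by simp
  have "(\<Sum>j=1..Suc m. L (Suc m - j) * (r (j - 1) - r j)) = (\<Sum>i=0..m. L (m - i) * (r i - r (Suc i)))"
    unfolding One_nat_def sum.atLeast_Suc_atMost_Suc_shift by simp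
  also have "\<dots> = (\<Sum>i=0..m. L (m - i) * r i) - (\<Sum>i=0..m. L (m - i) * r (Suc i))"
    by (simp add: sum_subtractf right_diff_distrib)
  also have "(\<Sum>i=0..m. L (m - i) * r i) = (\<Sum>i=0..m. L i * r (m - i))"
    using sum.atLeastAtMost_rev[of "\<lambda>i. L (m - i) * r i" 0 m] by simp
  also have "(\<Sum>i=0..m. L (m - i) * r (Suc i)) = (\<Sum>i=0..m. L i * r (Suc m - i))"
    using sum.atLeastAtMost_rev[of "\<lambda>i. L (m - i) * r (Suc i)" 0 m]
    by (simp add: Suc_diff_le)
  also have "\<dots> = 1 - L (Suc m)"
    using renewal[of "Suc m"] r0 by (simp add: sum.atLeast0_atMost_Suc)
  finally show ?thesis using renewal[of m] m by simp
qed

text \<open>For a positive log-convex sequence the ratios \<open>L\<^sub>n\<^sub>+\<^sub>1 / L\<^sub>n\<close> are nondecreasing,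
  written here without division.\<close>
lemma log_convex_ratio_mono:
  fixes L :: "nat \<Rightarrow> real"
  assumes pos: "\<And>n. L n > 0"
    and logconv: "\<And>n. n \<ge> 1 \<Longrightarrow> (L n)\<^sup>2 \<le> L (n - 1) * L (n + 1)"
    and "p \<le> q"
  shows "L (Suc p) * L q \<le> L p * L (Suc q)"
  using \<open>p \<le> q\<close>
proof (induction q rule: dec_induct)
  case base
  then show ?case by (simp add: mult.commute)
next
  case (step q)
  have lc: "L (Suc q) * L (Suc q) \<le> L q * L (Suc (Suc q))"
    using logconv[of "Suc q"] by (simp add: power2_eq_square)
  have "L (Suc p) * L (Suc q) * L q = (L (Suc p) * L q) * L (Suc q)" by simp
  also have "\<dots> \<le> (L p * L (Suc q)) * L (Suc q)"
    using step.IH pos[of "Suc q"] by (simp add: mult_right_mono)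
  also have "\<dots> = L p * (L (Suc q) * L (Suc q))" by simp
  also have "\<dots> \<le> L p * (L q * L (Suc (Suc q)))"
    using lc pos[of p] by (simp add: mult_left_mono)
  also have "\<dots> = (L p * L (Suc (Suc q))) * L q" by simp
  finally show ?case using pos[of q] by simp
qed

text \<open>Combining the equations
  for \<open>n = m\<close> and \<open>n = m + 1\<close> expresses \<open>L\<^sub>m L\<^sub>0 D\<^sub>m\<^sub>+\<^sub>1\<close> as a combination of the
  earlier \<open>D\<^sub>j\<close> with coefficients \<open>L\<^sub>m\<^sub>+\<^sub>1 L\<^sub>m\<^sub>-\<^sub>j - L\<^sub>m L\<^sub>m\<^sub>+\<^sub>1\<^sub>-\<^sub>j \<ge> 0\<close>.\<close>
lemma kaluza_nonneg:
  fixes L D :: "nat \<Rightarrow> real"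
  assumes pos: "\<And>n. L n > 0"
    and ratio: "\<And>p q. p \<le> q \<Longrightarrow> L (Suc p) * L q \<le> L p * L (Suc q)"
    and conv: "\<And>n. n \<ge> 1 \<Longrightarrow> (\<Sum>j=1..n. L (n - j) * D j) = L n"
    and "n \<ge> 1"
  shows "D n \<ge> 0"
  using \<open>n \<ge> 1\<close>
proof (induction n rule: less_induct)
  case (less n)
  then obtain m where n: "n = Suc m" by (cases n) auto
  have Sn: "L 0 * D (Suc m) + (\<Sum>j=1..m. L (Suc m - j) * D j) = L (Suc m)"
    using conv[of "Suc m"] by (simp add: sum.cl_ivl_Suc)
  show ?case
  proof (cases "m = 0")
    case True
    then have "L 0 * D 1 = L 1" using Sn by simp
    then have "L 0 * D 1 > 0" using pos[of 1] by simp
    then show ?thesis using pos[of 0] n True by (simp add: zero_less_mult_iff)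
  next
    case False
    have Sm: "(\<Sum>j=1..m. L (m - j) * D j) = L m" using conv[of m] False by simp
    have "L 0 * D (Suc m) = L (Suc m) - (\<Sum>j=1..m. L (Suc m - j) * D j)"
      using Sn by simp
    then have "L m * (L 0 * D (Suc m)) = L (Suc m) * L m - L m * (\<Sum>j=1..m. L (Suc m - j) * D j)"
      by (simp only: right_diff_distrib mult.commute)
    also have "\<dots> = L (Suc m) * (\<Sum>j=1..m. L (m - j) * D j) - L m * (\<Sum>j=1..m. L (Suc m - j) * D j)"
      using Sm by simp
    also have "\<dots> = (\<Sum>j=1..m. (L (Suc m) * L (m - j) - L m * L (Suc m - j)) * D j)"
      by (simp only: sum_distrib_left sum_subtractf[symmetric] left_diff_distrib mult.assoc)
    also have "\<dots> \<ge> 0"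
    proof (rule sum_nonneg)
      fix j assume j: "j \<in> {1..m}"
      have "L (Suc (m - j)) * L m \<le> L (m - j) * L (Suc m)" by (rule ratio) simp
      moreover have "Suc m - j = Suc (m - j)" using j by auto
      ultimately have "L (Suc m) * L (m - j) - L m * L (Suc m - j) \<ge> 0"
        by (simp add: mult.commute)
      moreover have "D j \<ge> 0" using less.IH j n by auto
      ultimately show "(L (Suc m) * L (m - j) - L m * L (Suc m - j)) * D j \<ge> 0" by simp
    qed
    finally show ?thesis using pos[of m] pos[of 0] n by (simp add: zero_le_mult_iff)
  qed
qed

lemma summable_shift_from_one:
  fixes k :: "nat \<Rightarrow> real"
  assumes "summable (\<lambda>j. k (j + 1))"
  shows "summable (\<lambda>j. k (j + m))"
  using assms summable_iff_shift[of k 1] summable_iff_shift[of k m] by simp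

lemma lam_pos:
  fixes k :: "nat \<Rightarrow> real"
  assumes kpos: "\<And>n. n \<ge> 1 \<Longrightarrow> k n > 0" and ksum: "summable (\<lambda>j. k (j + 1))"
  shows "lam k n > 0"
proof (cases "n = 0")
  case False
  have "0 < (\<Sum>j. k (j + n))"
    by (rule suminf_pos[OF summable_shift_from_one[OF ksum]]) (use kpos False in simp)
  then show ?thesis using False by (simp add: lam_def)
qed (simp add: lam_def)

lemma lam_diff:
  fixes k :: "nat \<Rightarrow> real"
  assumes ksum: "summable (\<lambda>j. k (j + 1))" and "m \<ge> 1"
  shows "lam k m - lam k (Suc m) = k m"
proof -
  have "(\<Sum>j. k (Suc j + m)) = (\<Sum>j. k (j + m)) - k (0 + m)"
    using suminf_split_head[OF summable_shift_from_one[OF ksum, of m]] by simp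
  then show ?thesis using \<open>m \<ge> 1\<close> by (simp add: lam_def)
qed

lemma resolvent_lam_recurrence:
  fixes k r :: "nat \<Rightarrow> real"
  assumes ksum: "summable (\<lambda>j. k (j + 1))"
    and res: "is_discrete_resolvent (- lam k 1) k r"
  shows "r (Suc n) = (\<Sum>i=0..n. (lam k i - lam k (Suc i)) * r (n - i))"
proof -
  have rec: "r (Suc n) - r n = - lam k 1 * r n + (\<Sum>j=1..n. k j * r (n - j))"
    using res by (simp add: is_discrete_resolvent_def)
  have "(\<Sum>i=1..n. (lam k i - lam k (Suc i)) * r (n - i)) = (\<Sum>j=1..n. k j * r (n - j))"
    by (rule sum.cong) (simp_all add: lam_diff[OF ksum])
  moreover have "(\<Sum>i=0..n. (lam k i - lam k (Suc i)) * r (n - i))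
      = (lam k 0 - lam k 1) * r n + (\<Sum>i=1..n. (lam k i - lam k (Suc i)) * r (n - i))"
    by (simp add: sum.atLeast_Suc_atMost)
  ultimately show ?thesis using rec by (simp add: lam_def algebra_simps)
qed

theorem mainTheorem10:
  fixes k r :: "nat \<Rightarrow> real" and a :: real
  assumes kpos: "\<And>n. n \<ge> 1 \<Longrightarrow> k n > 0"
    and ksum: "summable (\<lambda>j. k (j + 1))"
    and ksum_le: "(\<Sum>j. k (j + 1)) \<le> 1"
    and a_def: "a = - (\<Sum>j. k (j + 1))"
    and logconv: "\<And>n. n \<ge> 1 \<Longrightarrow> (lam k n)\<^sup>2 \<le> lam k (n - 1) * lam k (n + 1)"
    and res: "is_discrete_resolvent a k r"
  shows "(\<forall>n\<ge>1. r (n - 1) - r n = lam k n - (\<Sum>j=1..n-1. lam k (n - j) * (r (j - 1) - r j)))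
         \<and> (\<forall>n\<ge>1. r (n - 1) - r n \<ge> 0)
         \<and> decseq r"
proof -
  have L0: "lam k 0 = 1" by (simp add: lam_def)
  have "a = - lam k 1" by (simp add: a_def lam_def)
  with res have rec: "r (Suc n) = (\<Sum>i=0..n. (lam k i - lam k (Suc i)) * r (n - i))" for n
    using resolvent_lam_recurrence[OF ksum] by simp
  have renewal: "(\<Sum>i=0..n. lam k i * r (n - i)) = 1" for n
    using res rec renewal_identity[where L = "lam k" and r = r, OF L0]
    by (simp add: is_discrete_resolvent_def)
  have incr: "(\<Sum>j=1..n. lam k (n - j) * (r (j - 1) - r j)) = lam k n" if "n \<ge> 1" for n
    using renewal_increments[OF L0 renewal that] .
  have eqn: "r (n - 1) - r n = lam k n - (\<Sum>j=1..n-1. lam k (n - j) * (r (j - 1) - r j))"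
    if "n \<ge> 1" for n
    using incr[OF that] that L0 by (cases n) (simp_all add: sum.cl_ivl_Suc)
  have nonneg: "r (n - 1) - r n \<ge> 0" if "n \<ge> 1" for n
    using kaluza_nonneg[OF lam_pos[OF kpos ksum]
        log_convex_ratio_mono[OF lam_pos[OF kpos ksum] logconv] incr that] .
  have "decseq r"
    unfolding decseq_Suc_iff using nonneg[of "Suc _"] by simp
  with eqn nonneg show ?thesis by blast
qed

end
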